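(* Given two curves $\sigma=(v_1,\dots,v_{m'})$ and $\tau=(w_1,\dots,w_{m''})$ in $\mathbb{R}^d$ and a parameter $k\in\mathbb{N}$, for any $0<\varepsilon\le 1$ there exists a $(1+\varepsilon)$-approximation algorithm for $d_{k\text{-}DTW}(\sigma,\tau)$ (i.e., one that outputs a value $X$ with $d_{k\text{-}DTW}(\sigma,\tau)\le X\le(1+\varepsilon)\,d_{k\text{-}DTW}(\sigma,\tau)$) that runs in $O\!\left(m'm''\frac{\log(k/\varepsilon)}{\varepsilon}\right)$ time.
   Context: A traversal of $\sigma$ and $\tau$ is a sequence of index pairs starting with $(1,1)$, ending with $(m',m'')$, where each $(i,j)$ is followed only by $(i+1,j)$, $(i,j+1)$ or $(i+1,j+1)$. For a traversal $T$ let $s^{(T)}_1\ge s^{(T)}_2\ge\dots$ be the Euclidean distances $\|v_i-w_j\|$, $(i,j)\in T$, sorted non-increasingly, padded with zeros beyond $|T|$; $d_{k\text{-}DTW}(\sigma,\tau)=\min_T\sum_{l=1}^k s^{(T)}_l$. Running time counts distance computations and arithmetic operations as unit cost. *)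

theory Defs
  imports Complex_Main
begin

text \<open>A point of R^d is a real list of length d; a curve is a nonempty list of points.
  Curve vertices are indexed 1..m as in the paper (list position i-1).\<close>

definition eucl_dist :: "real list \<Rightarrow> real list \<Rightarrow> real" where
  "eucl_dist x y = sqrt (\<Sum>i<length x. (x ! i - y ! i)^2)"

definition is_traversal :: "nat \<Rightarrow> nat \<Rightarrow> (nat \<times> nat) list \<Rightarrow> bool" where
  "is_traversal m1 m2 T \<longleftrightarrow> T \<noteq> [] \<and> hd T = (1,1) \<and> last T = (m1, m2) \<and>
     (\<forall>l. Suc l < length T \<longrightarrow>
        (let (i,j) = T ! l in T ! Suc l \<in> {(i+1,j), (i,j+1), (i+1,j+1)}))"

definition topk_sum :: "nat \<Rightarrow> real list \<Rightarrow> real" where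
  "topk_sum k xs = (let s = rev (sort xs) in
     (\<Sum>l<k. if l < length s then s ! l else 0))"

definition trav_cost :: "nat \<Rightarrow> real list list \<Rightarrow> real list list \<Rightarrow> (nat \<times> nat) list \<Rightarrow> real" where
  "trav_cost k \<sigma> \<tau> T = topk_sum k (map (\<lambda>(i,j). eucl_dist (\<sigma> ! (i - 1)) (\<tau> ! (j - 1))) T)"

definition kdtw :: "nat \<Rightarrow> real list list \<Rightarrow> real list list \<Rightarrow> real" where
  "kdtw k \<sigma> \<tau> = Inf {trav_cost k \<sigma> \<tau> T | T. is_traversal (length \<sigma>) (length \<tau>) T}"

text \<open>The algorithm accesses the input only through distance queries
  dist(v_i, w_j) (1-based indices) and performs exact real arithmetic
  (+, -, *, /), constants and comparisons; every node costs one unit.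
  Computed values are kept in a store (list), addressed by position.\<close>

datatype aop = Add | Sub | Mul | Dvd

datatype ctree =
    Ret nat
  | Query nat nat ctree
  | Cnst real ctree
  | Op aop nat nat ctree
  | IfLe nat nat ctree ctree

fun apply_op :: "aop \<Rightarrow> real \<Rightarrow> real \<Rightarrow> real" where
  "apply_op Add x y = x + y"
| "apply_op Sub x y = x - y"
| "apply_op Mul x y = x * y"
| "apply_op Dvd x y = x / y"

definition lookup :: "real list \<Rightarrow> nat \<Rightarrow> real" where
  "lookup s a = (if a < length s then s ! a else 0)"

primrec run :: "(nat \<Rightarrow> nat \<Rightarrow> real) \<Rightarrow> real list \<Rightarrow> ctree \<Rightarrow> real \<times> nat" where
  "run D s (Ret a) = (lookup s a, 1)"
| "run D s (Query i j t) = (let (x, c) = run D (s @ [D i j]) t in (x, Suc c))"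
| "run D s (Cnst r t) = (let (x, c) = run D (s @ [r]) t in (x, Suc c))"
| "run D s (Op f a b t) =
     (let (x, c) = run D (s @ [apply_op f (lookup s a) (lookup s b)]) t in (x, Suc c))"
| "run D s (IfLe a b t1 t2) =
     (let (x, c) = (if lookup s a \<le> lookup s b then run D s t1 else run D s t2) in (x, Suc c))"

definition curve_oracle :: "real list list \<Rightarrow> real list list \<Rightarrow> nat \<Rightarrow> nat \<Rightarrow> real" where
  "curve_oracle \<sigma> \<tau> i j =
     (if 1 \<le> i \<and> i \<le> length \<sigma> \<and> 1 \<le> j \<and> j \<le> length \<tau>
      then eucl_dist (\<sigma> ! (i - 1)) (\<tau> ! (j - 1)) else 0)"

end

theory Submission
  imports Defs "HOL-Library.Multiset"
begin

(*
  For a list of nonnegative reals, the sum of its k largest entries is the minimum over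
  z >= 0 of k z + sum (x - z)^+, attained at the k-th largest entry.  Exchanging the two
  minimisations, d_kDTW is the minimum over z of k z plus the ordinary DTW cost for the
  truncated weights (d - z)^+, and the latter is a dynamic program over the m' x m'' grid.
  The bottleneck value M (the least possible maximal distance along a traversal) is a
  dynamic program as well; it is a lower bound for d_kDTW, and the candidate at z = M beats
  every larger threshold.  On the grid z_i = M / (1 + eps)^i, i <= N, with
  k <= eps (1 + eps)^N, the grid point just above the optimal threshold loses at most a
  factor 1 + eps, and below z_N the additive error k z_N <= eps M is small.  Hence
  N + 1 = O(log(k/eps) / eps) dynamic programs suffice.
*)

section \<open>Sums of the k largest entries\<close>

definition excess :: "real \<Rightarrow> real list \<Rightarrow> real" where
  "excess z xs = (\<Sum>x\<leftarrow>xs. max (x - z) 0)"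

lemma excess_append [simp]: "excess z (xs @ ys) = excess z xs + excess z ys"
  by (simp add: excess_def)

lemma excess_nonneg: "0 \<le> excess z xs"
  unfolding excess_def by (rule sum_list_nonneg) auto

lemma excess_antimono: "z \<le> z' \<Longrightarrow> excess z' xs \<le> excess z xs"
  unfolding excess_def by (intro sum_list_mono) auto

lemma excess_eq_0: "\<forall>x\<in>set xs. x \<le> z \<Longrightarrow> excess z xs = 0"
  unfolding excess_def by (subst map_cong[OF refl, where g="\<lambda>_. 0"]) auto

lemma sum_list_map_rev_sort:
  fixes f :: "'a::linorder \<Rightarrow> 'b::comm_monoid_add"
  shows "(\<Sum>x\<leftarrow>rev (sort xs). f x) = (\<Sum>x\<leftarrow>xs. f x)"
  unfolding sum_mset_sum_list[symmetric] by simp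

lemma topk_sum_eq_sum_take: "topk_sum k xs = sum_list (take k (rev (sort xs)))"
  unfolding topk_sum_def Let_def
  by (induction k) (auto simp: take_Suc_conv_app_nth not_less)

lemma topk_sum_le_excess:
  assumes "0 \<le> z"
  shows "topk_sum k xs \<le> real k * z + excess z xs"
proof -
  define s where "s = rev (sort xs)"
  have "topk_sum k xs \<le> (\<Sum>x\<leftarrow>take k s. z + max (x - z) 0)"
    unfolding topk_sum_eq_sum_take s_def[symmetric]
    using sum_list_mono[of "take k s" "\<lambda>x. x"] by simp
  also have "\<dots> = real (length (take k s)) * z + excess z (take k s)"
    by (simp add: excess_def sum_list_addf sum_list_triv)
  also have "\<dots> \<le> real k * z + excess z s"
    using assms excess_nonneg[of z "drop k s"] mult_right_mono[of "real (length (take k s))" "real k" z]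
    by (subst (3) append_take_drop_id[of k s, symmetric], subst excess_append) auto
  also have "excess z s = excess z xs"
    by (simp add: s_def excess_def sum_list_map_rev_sort)
  finally show ?thesis .
qed

lemma topk_sum_eq_excess:
  assumes "\<forall>x\<in>set xs. 0 \<le> x"
  shows "\<exists>z\<ge>0. real k * z + excess z xs = topk_sum k xs"
proof (cases "length xs \<le> k")
  case True
  have "excess 0 xs = sum_list xs"
    unfolding excess_def using assms by (induction xs) auto
  then show ?thesis
    using True by (intro exI[of _ 0]) (simp add: topk_sum_eq_sum_take flip: sum_mset_sum_list)
next
  case False
  define s where "s = rev (sort xs)"
  define z where "z = s ! (k - 1)"
  have len: "k < length s" using False by (simp add: s_def)
  have desc: "s ! j \<le> s ! i" if "i \<le> j" "j < length s" for i j
    using sorted_rev_nth_mono[of s i j] that by (simp add: s_def)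
  have take_ge: "z \<le> x" if "x \<in> set (take k s)" for x
    using that len desc by (auto simp: z_def in_set_conv_nth)
  have drop_le: "x \<le> z" if "x \<in> set (drop k s)" for x
    using that len desc by (auto simp: z_def in_set_conv_nth)
  have "0 \<le> z" using assms len nth_mem[of "k - 1" s] by (simp add: z_def s_def)
  moreover have "excess z (take k s) = sum_list (take k s) - real k * z"
  proof -
    have "excess z (take k s) = (\<Sum>x\<leftarrow>take k s. x - z)"
      unfolding excess_def using take_ge by (intro arg_cong[where f=sum_list] map_cong) auto
    then show ?thesis using len by (simp add: sum_list_subtractf sum_list_triv)
  qed
  moreover have "excess z (drop k s) = 0"
    using drop_le by (simp add: excess_eq_0)
  moreover have "excess z xs = excess z s"
    by (simp add: s_def excess_def sum_list_map_rev_sort)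
  moreover have "excess z s = excess z (take k s) + excess z (drop k s)"
    using excess_append[of z "take k s" "drop k s"] by simp
  moreover have "topk_sum k xs = sum_list (take k s)"
    by (simp add: topk_sum_eq_sum_take s_def)
  ultimately show ?thesis by (intro exI[of _ z]) simp
qed

lemma topk_sum_nonneg:
  assumes "\<forall>x\<in>set xs. 0 \<le> x"
  shows "0 \<le> topk_sum k xs"
proof -
  obtain z where "0 \<le> z" "real k * z + excess z xs = topk_sum k xs"
    using topk_sum_eq_excess[OF assms] by blast
  then show ?thesis using excess_nonneg[of z xs] by (metis add_nonneg_nonneg mult_nonneg_nonneg of_nat_0_le_iff)
qed

lemma member_le_topk_sum:
  assumes "\<forall>x\<in>set xs. 0 \<le> x" "1 \<le> k" "x \<in> set xs"
  shows "x \<le> topk_sum k xs"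
proof -
  obtain z where z: "0 \<le> z" "real k * z + excess z xs = topk_sum k xs"
    using topk_sum_eq_excess assms(1) by blast
  have "max (x - z) 0 \<le> excess z xs"
    unfolding excess_def using assms(3) by (intro member_le_sum_list) auto
  moreover have "z \<le> real k * z" using z(1) assms(2) by (simp add: mult_le_cancel_right1)
  ultimately show ?thesis using z(2) by linarith
qed

section \<open>Traversals and their dynamic programs\<close>

fun grid_step :: "nat \<times> nat \<Rightarrow> nat \<times> nat \<Rightarrow> bool" where
  "grid_step (i, j) q \<longleftrightarrow> q \<in> {(i + 1, j), (i, j + 1), (i + 1, j + 1)}"

lemma is_traversal_iff_successively:
  "is_traversal a b T \<longleftrightarrow> T \<noteq> [] \<and> hd T = (1, 1) \<and> last T = (a, b) \<and> successively grid_step T"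
proof -
  have step: "(let (i, j) = p in q \<in> {(i + 1, j), (i, j + 1), (i + 1, j + 1)}) \<longleftrightarrow> grid_step p q" for p q
    by (cases p) simp
  show ?thesis by (simp only: is_traversal_def successively_conv_nth step)
qed

lemma is_traversal_nonempty: "is_traversal a b T \<Longrightarrow> T \<noteq> []"
  by (simp add: is_traversal_def)

lemma is_traversal_single [simp]: "is_traversal a b [p] \<longleftrightarrow> p = (1, 1) \<and> (a, b) = (1, 1)"
  by (auto simp: is_traversal_iff_successively)

lemma is_traversal_snoc:
  assumes "T \<noteq> []"
  shows "is_traversal a b (T @ [p]) \<longleftrightarrow>
    p = (a, b) \<and> is_traversal (fst (last T)) (snd (last T)) T \<and> grid_step (last T) p"
  using assms by (auto simp: is_traversal_iff_successively successively_append_iff)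

lemma is_traversal_last: "is_traversal a b T \<Longrightarrow> last T = (a, b)"
  by (simp add: is_traversal_def)

lemma is_traversal_extend:
  assumes "is_traversal a b T" "grid_step (a, b) p"
  shows "is_traversal (fst p) (snd p) (T @ [p])"
  using assms is_traversal_nonempty[OF assms(1)] is_traversal_last[OF assms(1)]
  by (simp add: is_traversal_snoc)

lemma is_traversal_bounds:
  "is_traversal a b T \<Longrightarrow> p \<in> set T \<Longrightarrow> 1 \<le> fst p \<and> fst p \<le> a \<and> 1 \<le> snd p \<and> snd p \<le> b"
proof (induction T arbitrary: a b p rule: rev_induct)
  case (snoc q T)
  show ?case
  proof (cases "T = []")
    case False
    obtain a' b' where last: "last T = (a', b')" by (cases "last T")
    have T: "is_traversal a' b' T" and step: "grid_step (a', b') (a, b)" and q: "q = (a, b)"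
      using snoc.prems(1) is_traversal_snoc[OF False] last by auto
    have "1 \<le> a' \<and> 1 \<le> b'" using snoc.IH[OF T last_in_set[OF False]] last by simp
    moreover have "a' \<le> a \<and> b' \<le> b" using step by auto
    ultimately show ?thesis
      using snoc.IH[OF T, of p] snoc.prems(2) q by (cases "p \<in> set T") auto
  qed (use snoc.prems in simp)
qed simp

definition path_value :: "(real \<Rightarrow> real \<Rightarrow> real) \<Rightarrow> (nat \<times> nat \<Rightarrow> real) \<Rightarrow> (nat \<times> nat) list \<Rightarrow> real" where
  "path_value f G T = foldl (\<lambda>acc p. f (G p) acc) 0 T"

lemma path_value_Nil [simp]: "path_value f G [] = 0"
  by (simp add: path_value_def)

lemma path_value_snoc [simp]: "path_value f G (T @ [p]) = f (G p) (path_value f G T)"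
  by (simp add: path_value_def)

lemma path_value_plus: "path_value (+) G T = (\<Sum>p\<leftarrow>T. G p)"
  by (induction T rule: rev_induct) auto

lemma path_value_max: "path_value max G T = Max (insert 0 (G ` set T))"
proof (induction T rule: rev_induct)
  case (snoc p T)
  have "path_value max G (T @ [p]) = Max (insert (G p) (insert 0 (G ` set T)))"
    using snoc by (simp add: Max_insert)
  then show ?case by (simp add: insert_commute)
qed simp

fun path_dp :: "(real \<Rightarrow> real \<Rightarrow> real) \<Rightarrow> (nat \<times> nat \<Rightarrow> real) \<Rightarrow> nat \<Rightarrow> nat \<Rightarrow> real" where
  "path_dp f G 0 0 = f (G (1, 1)) 0"
| "path_dp f G 0 (Suc j) = f (G (1, Suc j + 1)) (path_dp f G 0 j)"
| "path_dp f G (Suc i) 0 = f (G (Suc i + 1, 1)) (path_dp f G i 0)"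
| "path_dp f G (Suc i) (Suc j) = f (G (Suc i + 1, Suc j + 1))
     (min (min (path_dp f G i (Suc j)) (path_dp f G (Suc i) j)) (path_dp f G i j))"

lemma path_dp_le_path_value:
  assumes "\<And>x. mono (f x)"
  shows "is_traversal (Suc i) (Suc j) T \<Longrightarrow> path_dp f G i j \<le> path_value f G T"
proof (induction T arbitrary: i j rule: rev_induct)
  case (snoc p T)
  show ?case
  proof (cases "T = []")
    case False
    obtain a b where last: "last T = (Suc a, Suc b)"
      using is_traversal_bounds[of _ _ T "last T"] snoc.prems False is_traversal_snoc
      by (metis Suc_le_D One_nat_def last_in_set prod.collapse)
    have T: "is_traversal (Suc a) (Suc b) T" and p: "p = (Suc i, Suc j)"
      and step: "grid_step (Suc a, Suc b) (Suc i, Suc j)"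
      using snoc.prems is_traversal_snoc[OF False] last by auto
    have "path_dp f G i j \<le> f (G (Suc i, Suc j)) (path_dp f G a b)"
      using step by (cases i; cases j) (auto intro!: monoD[OF assms])
    also have "\<dots> \<le> f (G (Suc i, Suc j)) (path_value f G T)"
      using snoc.IH[OF T] by (rule monoD[OF assms])
    finally show ?thesis using p by simp
  qed (use snoc.prems in \<open>auto simp: path_value_def\<close>)
qed (simp add: is_traversal_def)

lemma path_dp_attained:
  "\<exists>T. is_traversal (Suc i) (Suc j) T \<and> path_value f G T = path_dp f G i j"
proof (induction f G i j rule: path_dp.induct)
  case (1 f G)
  show ?case by (intro exI[of _ "[(1, 1)]"]) (simp add: path_value_def)
next
  case (2 f G j)
  then obtain T where "is_traversal 1 (Suc j) T" "path_value f G T = path_dp f G 0 j" by auto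
  then show ?case using is_traversal_extend[of 1 "Suc j" T "(1, Suc (Suc j))"] by fastforce
next
  case (3 f G i)
  then obtain T where "is_traversal (Suc i) 1 T" "path_value f G T = path_dp f G i 0" by auto
  then show ?case using is_traversal_extend[of "Suc i" 1 T "(Suc (Suc i), 1)"] by fastforce
next
  case (4 f G i j)
  obtain a b where ab: "(a, b) \<in> {(i, Suc j), (Suc i, j), (i, j)}"
    and min: "path_dp f G a b = min (min (path_dp f G i (Suc j)) (path_dp f G (Suc i) j)) (path_dp f G i j)"
    by (metis insertCI min_def)
  obtain T where "is_traversal (Suc a) (Suc b) T" "path_value f G T = path_dp f G a b"
    using 4 ab by auto
  moreover have "grid_step (Suc a, Suc b) (Suc (Suc i), Suc (Suc j))" using ab by auto
  ultimately show ?case using min is_traversal_extend by fastforce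
qed

lemma path_dp_optimal:
  assumes "0 < m1" "0 < m2"
  shows "\<exists>T. is_traversal m1 m2 T \<and> path_value f G T = path_dp f G (m1 - 1) (m2 - 1)"
    and "(\<And>x. mono (f x)) \<Longrightarrow> is_traversal m1 m2 T \<Longrightarrow> path_dp f G (m1 - 1) (m2 - 1) \<le> path_value f G T"
  using path_dp_attained[of "m1 - 1" "m2 - 1" f G] path_dp_le_path_value[of f "m1 - 1" "m2 - 1" T G] assms
  by simp_all

section \<open>Approximation by a geometric grid of thresholds\<close>

lemma ex_crossing_index:
  fixes f :: "nat \<Rightarrow> 'a::linorder"
  shows "f n < c \<Longrightarrow> c \<le> f 0 \<Longrightarrow> \<exists>i<n. f (Suc i) < c \<and> c \<le> f i"
proof (induction n)
  case (Suc n)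
  show ?case
  proof (cases "c \<le> f n")
    case False
    then show ?thesis using Suc by (auto simp: not_le intro: less_SucI)
  qed (use Suc.prems in auto)
qed simp

lemma geometric_threshold_search:
  fixes L :: "real list set" and F :: "nat \<Rightarrow> real" and \<epsilon> M :: real
  defines "z \<equiv> \<lambda>i. M / (1 + \<epsilon>) ^ i"
  assumes \<epsilon>: "0 < \<epsilon>" and N: "real k \<le> \<epsilon> * (1 + \<epsilon>) ^ N"
    and nonneg: "\<And>xs x. xs \<in> L \<Longrightarrow> x \<in> set xs \<Longrightarrow> 0 \<le> x"
    and M: "0 \<le> M" "xsM \<in> L" "\<forall>x\<in>set xsM. x \<le> M" "\<And>xs. xs \<in> L \<Longrightarrow> M \<le> topk_sum k xs"
    and F: "\<And>i xs. xs \<in> L \<Longrightarrow> F i \<le> real k * z i + excess (z i) xs"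
    and xs: "xs \<in> L"
  shows "\<exists>i\<le>N. F i \<le> (1 + \<epsilon>) * topk_sum k xs"
proof -
  define c where "c = topk_sum k xs"
  obtain z0 where z0: "0 \<le> z0" "real k * z0 + excess z0 xs = c"
    using topk_sum_eq_excess[of xs k] nonneg[OF xs] unfolding c_def by blast
  have "M \<le> c" using M(4)[OF xs] by (simp add: c_def)
  have "real k * z0 \<le> c" using z0(2) excess_nonneg[of z0 xs] by linarith
  have "0 \<le> \<epsilon> * c" using \<epsilon> \<open>M \<le> c\<close> M(1) by simp
  have below: "F i \<le> c + real k * z i - real k * z0" if "z0 \<le> z i" for i
    using F[OF xs, of i] excess_antimono[OF that, of xs] z0(2) by (simp add: algebra_simps)
  consider "M \<le> z0" | "z0 \<le> z N" | "z N < z0" "z0 < M" by fastforce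
  then show ?thesis
  proof cases
    case 1
    have "F 0 \<le> real k * M" using F[OF M(2), of 0] excess_eq_0[OF M(3)] by (simp add: z_def)
    also have "\<dots> \<le> c" using 1 \<open>real k * z0 \<le> c\<close> mult_left_mono[OF 1, of "real k"] by linarith
    also have "\<dots> \<le> (1 + \<epsilon>) * c" using \<open>0 \<le> \<epsilon> * c\<close> by (simp add: algebra_simps)
    finally show ?thesis by (auto simp: c_def)
  next
    case 2
    have "real k * M \<le> \<epsilon> * (1 + \<epsilon>) ^ N * M" using mult_right_mono[OF N M(1)] .
    then have "real k * z N \<le> \<epsilon> * M" using \<epsilon> by (simp add: z_def field_simps)
    moreover have "\<epsilon> * M \<le> \<epsilon> * c" using \<open>M \<le> c\<close> \<epsilon> by simp
    moreover have "0 \<le> real k * z0" using z0(1) by simp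
    ultimately have "F N \<le> c + \<epsilon> * c" using below[OF 2] by linarith
    then show ?thesis by (auto simp: c_def algebra_simps)
  next
    case 3
    then obtain i where i: "i < N" "z (Suc i) < z0" "z0 \<le> z i"
      using ex_crossing_index[of z N z0] by (auto simp: z_def)
    have "real k * z i = (1 + \<epsilon>) * (real k * z (Suc i))" using \<epsilon> by (simp add: z_def)
    also have "\<dots> \<le> (1 + \<epsilon>) * (real k * z0)"
      using i(2) \<epsilon> by (intro mult_left_mono) (auto intro: mult_left_mono)
    finally have "real k * z i - real k * z0 \<le> \<epsilon> * (real k * z0)" by (simp add: algebra_simps)
    also have "\<dots> \<le> \<epsilon> * c" using \<open>real k * z0 \<le> c\<close> \<epsilon> by simp
    finally have "F i \<le> (1 + \<epsilon>) * c" using below[OF i(3)] by (simp add: algebra_simps)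
    then show ?thesis using i(1) less_imp_le by (auto simp: c_def)
  qed
qed

definition excess_weight :: "(nat \<Rightarrow> nat \<Rightarrow> real) \<Rightarrow> real \<Rightarrow> nat \<times> nat \<Rightarrow> real" where
  "excess_weight D z = (\<lambda>(i, j). max (D i j - z) 0)"

definition bottleneck_dp :: "(nat \<Rightarrow> nat \<Rightarrow> real) \<Rightarrow> nat \<Rightarrow> nat \<Rightarrow> real" where
  "bottleneck_dp D m1 m2 = path_dp max (excess_weight D 0) (m1 - 1) (m2 - 1)"

definition kdtw_candidate :: "(nat \<Rightarrow> nat \<Rightarrow> real) \<Rightarrow> nat \<Rightarrow> nat \<Rightarrow> nat \<Rightarrow> real \<Rightarrow> nat \<Rightarrow> real" where
  "kdtw_candidate D m1 m2 k \<epsilon> i =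
     (let z = bottleneck_dp D m1 m2 / (1 + \<epsilon>) ^ i
      in real k * z + path_dp (+) (excess_weight D z) (m1 - 1) (m2 - 1))"

definition pair_dist :: "real list list \<Rightarrow> real list list \<Rightarrow> nat \<times> nat \<Rightarrow> real" where
  "pair_dist \<sigma> \<tau> = (\<lambda>(i, j). eucl_dist (\<sigma> ! (i - 1)) (\<tau> ! (j - 1)))"

lemma pair_dist_nonneg: "0 \<le> pair_dist \<sigma> \<tau> p"
  by (cases p) (simp add: pair_dist_def eucl_dist_def sum_nonneg)

lemma trav_cost_eq_topk_sum: "trav_cost k \<sigma> \<tau> T = topk_sum k (map (pair_dist \<sigma> \<tau>) T)"
  by (simp add: trav_cost_def pair_dist_def)

lemma mono_max: "mono (max (x::real))"
  by (rule monoI) simp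

lemma excess_weight_curve_oracle:
  assumes "is_traversal (length \<sigma>) (length \<tau>) T" "p \<in> set T"
  shows "excess_weight (curve_oracle \<sigma> \<tau>) z p = max (pair_dist \<sigma> \<tau> p - z) 0"
  using is_traversal_bounds[of _ _ T p] assms
  by (cases p) (auto simp: excess_weight_def curve_oracle_def pair_dist_def)

lemma path_value_plus_excess_weight:
  "is_traversal (length \<sigma>) (length \<tau>) T \<Longrightarrow>
   path_value (+) (excess_weight (curve_oracle \<sigma> \<tau>) z) T = excess z (map (pair_dist \<sigma> \<tau>) T)"
  by (simp add: path_value_plus excess_def excess_weight_curve_oracle cong: map_cong)

lemma path_value_max_excess_weight:
  "is_traversal (length \<sigma>) (length \<tau>) T \<Longrightarrow>
   path_value max (excess_weight (curve_oracle \<sigma> \<tau>) 0) T = Max (insert 0 (pair_dist \<sigma> \<tau> ` set T))"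
  by (simp add: path_value_max excess_weight_curve_oracle pair_dist_nonneg cong: image_cong)

lemma bottleneck_dp_curve_oracle:
  assumes "\<sigma> \<noteq> []" "\<tau> \<noteq> []" "1 \<le> k"
  defines "M \<equiv> bottleneck_dp (curve_oracle \<sigma> \<tau>) (length \<sigma>) (length \<tau>)"
  shows "0 \<le> M"
    and "\<exists>T. is_traversal (length \<sigma>) (length \<tau>) T \<and> (\<forall>p\<in>set T. pair_dist \<sigma> \<tau> p \<le> M)"
    and "is_traversal (length \<sigma>) (length \<tau>) T \<Longrightarrow> M \<le> topk_sum k (map (pair_dist \<sigma> \<tau>) T)"
proof -
  have length_pos: "0 < length \<sigma>" "0 < length \<tau>" using assms(1,2) by simp_all
  obtain TM where TM: "is_traversal (length \<sigma>) (length \<tau>) TM"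
    "M = Max (insert 0 (pair_dist \<sigma> \<tau> ` set TM))"
    using path_dp_optimal(1)[OF length_pos] path_value_max_excess_weight
    unfolding M_def bottleneck_dp_def by metis
  then show "0 \<le> M" by simp
  show "\<exists>T. is_traversal (length \<sigma>) (length \<tau>) T \<and> (\<forall>p\<in>set T. pair_dist \<sigma> \<tau> p \<le> M)"
    using TM by auto
  assume T: "is_traversal (length \<sigma>) (length \<tau>) T"
  have "M \<le> Max (insert 0 (pair_dist \<sigma> \<tau> ` set T))"
    using path_dp_optimal(2)[where f = max and G = "excess_weight (curve_oracle \<sigma> \<tau>) 0",
        OF length_pos mono_max T]
      path_value_max_excess_weight[OF T]
    unfolding M_def bottleneck_dp_def by simp
  also have "\<dots> \<le> topk_sum k (map (pair_dist \<sigma> \<tau>) T)"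
    using member_le_topk_sum[OF _ assms(3)] topk_sum_nonneg pair_dist_nonneg by auto
  finally show "M \<le> topk_sum k (map (pair_dist \<sigma> \<tau>) T)" .
qed

lemma kdtw_candidate_curve_oracle:
  fixes \<epsilon> :: real and i :: nat
  assumes "\<sigma> \<noteq> []" "\<tau> \<noteq> []" "1 \<le> k"
  defines "z \<equiv> bottleneck_dp (curve_oracle \<sigma> \<tau>) (length \<sigma>) (length \<tau>) / (1 + \<epsilon>) ^ i"
  defines "F \<equiv> kdtw_candidate (curve_oracle \<sigma> \<tau>) (length \<sigma>) (length \<tau>) k \<epsilon>"
  shows "is_traversal (length \<sigma>) (length \<tau>) T \<Longrightarrow>
      F i \<le> real k * z + excess z (map (pair_dist \<sigma> \<tau>) T)"
    and "0 < \<epsilon> \<Longrightarrow>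
      \<exists>T. is_traversal (length \<sigma>) (length \<tau>) T \<and> topk_sum k (map (pair_dist \<sigma> \<tau>) T) \<le> F i"
proof -
  have length_pos: "0 < length \<sigma>" "0 < length \<tau>" using assms(1,2) by simp_all
  have F: "F i = real k * z + path_dp (+) (excess_weight (curve_oracle \<sigma> \<tau>) z) (length \<sigma> - 1) (length \<tau> - 1)"
    by (simp add: F_def z_def kdtw_candidate_def Let_def)
  show "F i \<le> real k * z + excess z (map (pair_dist \<sigma> \<tau>) T)"
    if "is_traversal (length \<sigma>) (length \<tau>) T"
    using path_dp_optimal(2)[where f = "(+)" and G = "excess_weight (curve_oracle \<sigma> \<tau>) z",
        OF length_pos mono_add that]
      path_value_plus_excess_weight[OF that] F by simp
  assume "0 < \<epsilon>"
  then have "0 \<le> z" using bottleneck_dp_curve_oracle(1)[OF assms(1-3)] by (simp add: z_def)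
  obtain T where T: "is_traversal (length \<sigma>) (length \<tau>) T"
    "path_value (+) (excess_weight (curve_oracle \<sigma> \<tau>) z) T =
     path_dp (+) (excess_weight (curve_oracle \<sigma> \<tau>) z) (length \<sigma> - 1) (length \<tau> - 1)"
    using path_dp_optimal(1)[OF length_pos] by blast
  then show "\<exists>T. is_traversal (length \<sigma>) (length \<tau>) T \<and> topk_sum k (map (pair_dist \<sigma> \<tau>) T) \<le> F i"
    using topk_sum_le_excess[OF \<open>0 \<le> z\<close>] path_value_plus_excess_weight[OF T(1)] F by metis
qed

lemma kdtw_approx_by_candidates:
  assumes "\<sigma> \<noteq> []" "\<tau> \<noteq> []" "1 \<le> k" "0 < \<epsilon>" "real k \<le> \<epsilon> * (1 + \<epsilon>) ^ N"
  defines "X \<equiv> Min (kdtw_candidate (curve_oracle \<sigma> \<tau>) (length \<sigma>) (length \<tau>) k \<epsilon> ` {..N})"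
  shows "kdtw k \<sigma> \<tau> \<le> X" and "X \<le> (1 + \<epsilon>) * kdtw k \<sigma> \<tau>"
proof -
  let ?F = "kdtw_candidate (curve_oracle \<sigma> \<tau>) (length \<sigma>) (length \<tau>) k \<epsilon>"
  let ?cost = "\<lambda>T. topk_sum k (map (pair_dist \<sigma> \<tau>) T)"
  let ?traversals = "{T. is_traversal (length \<sigma>) (length \<tau>) T}"
  have kdtw: "kdtw k \<sigma> \<tau> = Inf (?cost ` ?traversals)"
    unfolding kdtw_def trav_cost_eq_topk_sum by (rule arg_cong[where f = Inf]) blast
  have bdd: "bdd_below (?cost ` ?traversals)"
    by (intro bdd_belowI[of _ 0]) (auto intro!: topk_sum_nonneg simp: pair_dist_nonneg)
  obtain i where "i \<le> N" "X = ?F i"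
  proof -
    have "X \<in> ?F ` {..N}" unfolding X_def by (rule Min_in) auto
    then show ?thesis using that by auto
  qed
  then obtain T where "T \<in> ?traversals" "?cost T \<le> X"
    using kdtw_candidate_curve_oracle(2)[OF assms(1-4)] by auto
  then show "kdtw k \<sigma> \<tau> \<le> X"
    unfolding kdtw using cInf_lower[OF _ bdd] by (meson image_eqI order_trans)
  have "X \<le> (1 + \<epsilon>) * ?cost T" if T: "T \<in> ?traversals" for T
  proof -
    obtain TM where TM: "is_traversal (length \<sigma>) (length \<tau>) TM"
      "\<forall>p\<in>set TM. pair_dist \<sigma> \<tau> p \<le> bottleneck_dp (curve_oracle \<sigma> \<tau>) (length \<sigma>) (length \<tau>)"
      using bottleneck_dp_curve_oracle(2)[OF assms(1-3)] by blast
    have "\<exists>i\<le>N. ?F i \<le> (1 + \<epsilon>) * ?cost T"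
    proof (rule geometric_threshold_search[where L = "map (pair_dist \<sigma> \<tau>) ` ?traversals"
          and xsM = "map (pair_dist \<sigma> \<tau>) TM"])
      show "map (pair_dist \<sigma> \<tau>) TM \<in> map (pair_dist \<sigma> \<tau>) ` ?traversals" using TM by simp
    qed (use assms TM T pair_dist_nonneg bottleneck_dp_curve_oracle(1,3)[OF assms(1-3)]
          kdtw_candidate_curve_oracle(1)[OF assms(1-3)] in auto)
    then obtain i where "i \<le> N" "?F i \<le> (1 + \<epsilon>) * ?cost T" by blast
    moreover have "X \<le> ?F i" unfolding X_def using \<open>i \<le> N\<close> by (intro Min_le) auto
    ultimately show ?thesis by linarith
  qed
  then have "X / (1 + \<epsilon>) \<le> kdtw k \<sigma> \<tau>"
    unfolding kdtw using assms(4) bottleneck_dp_curve_oracle(2)[OF assms(1-3)]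
    by (intro cInf_greatest) (auto simp: divide_le_eq mult.commute)
  then show "X \<le> (1 + \<epsilon>) * kdtw k \<sigma> \<tau>" using assms(4) by (simp add: divide_le_eq mult.commute)
qed

section \<open>Straight-line programs\<close>

(* Computation trees have no min/max nodes: IMin a b is compiled to a comparison followed by
   u := a + b and u - b (or u - a).  instr_values mirrors this code literally; it yields
   min/max only for addresses inside the store (instr_values_min). *)
datatype instr = IQuery nat nat | IConst real | IArith aop nat nat | IMin nat nat | IMax nat nat

fun instr_values :: "(nat \<Rightarrow> nat \<Rightarrow> real) \<Rightarrow> real list \<Rightarrow> instr \<Rightarrow> real list" where
  "instr_values D s (IQuery i j) = [D i j]"
| "instr_values D s (IConst r) = [r]"
| "instr_values D s (IArith f a b) = [apply_op f (lookup s a) (lookup s b)]"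
| "instr_values D s (IMin a b) =
     (let u = lookup s a + lookup s b in [u, u - lookup (s @ [u]) (if lookup s a \<le> lookup s b then b else a)])"
| "instr_values D s (IMax a b) =
     (let u = lookup s a + lookup s b in [u, u - lookup (s @ [u]) (if lookup s a \<le> lookup s b then a else b)])"

fun exec :: "(nat \<Rightarrow> nat \<Rightarrow> real) \<Rightarrow> real list \<Rightarrow> instr list \<Rightarrow> real list" where
  "exec D s [] = s"
| "exec D s (x # xs) = exec D (s @ instr_values D s x) xs"

fun instr_cost :: "instr \<Rightarrow> nat" where
  "instr_cost (IMin a b) = 3"
| "instr_cost (IMax a b) = 3"
| "instr_cost _ = 1"

fun instr_width :: "instr \<Rightarrow> nat" where
  "instr_width (IMin a b) = 2"
| "instr_width (IMax a b) = 2"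
| "instr_width _ = 1"

fun compile :: "nat \<Rightarrow> instr list \<Rightarrow> nat \<Rightarrow> ctree" where
  "compile n [] r = Ret r"
| "compile n (IQuery i j # xs) r = Query i j (compile (Suc n) xs r)"
| "compile n (IConst c # xs) r = Cnst c (compile (Suc n) xs r)"
| "compile n (IArith f a b # xs) r = Op f a b (compile (Suc n) xs r)"
| "compile n (IMin a b # xs) r =
     IfLe a b (Op Add a b (Op Sub n b (compile (n + 2) xs r)))
              (Op Add a b (Op Sub n a (compile (n + 2) xs r)))"
| "compile n (IMax a b # xs) r =
     IfLe a b (Op Add a b (Op Sub n a (compile (n + 2) xs r)))
              (Op Add a b (Op Sub n b (compile (n + 2) xs r)))"

lemma lookup_append: "lookup (s @ xs) a = (if a < length s then lookup s a else lookup xs (a - length s))"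
  by (auto simp: lookup_def nth_append)

lemma lookup_append_left: "a < length s \<Longrightarrow> lookup (s @ xs) a = lookup s a"
  by (simp add: lookup_append)

lemma lookup_Cons: "lookup (x # xs) a = (if a = 0 then x else lookup xs (a - 1))"
  by (cases a) (auto simp: lookup_def)

lemma lookup_last: "xs \<noteq> [] \<Longrightarrow> lookup xs (length xs - 1) = last xs"
  by (simp add: lookup_def last_conv_nth)

lemma lookup_append_last: "xs \<noteq> [] \<Longrightarrow> lookup (s @ xs) (length s + length xs - 1) = last xs"
  by (cases xs rule: rev_cases) (auto simp: lookup_def nth_append)

lemma run_compile:
  "length s = n \<Longrightarrow>
   run D s (compile n xs r) = (lookup (exec D s xs) r, Suc (\<Sum>x\<leftarrow>xs. instr_cost x))"
proof (induction xs arbitrary: s n)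
  case (Cons x xs)
  have IH: "run D s' (compile m xs r) = (lookup (exec D s' xs) r, Suc (\<Sum>x\<leftarrow>xs. instr_cost x))"
    if "length s' = m" for s' m
    using Cons.IH that by blast
  show ?case
    using Cons.prems by (cases x) (auto simp: IH Let_def case_prod_beta lookup_append lookup_Cons)
qed simp

lemma exec_append [simp]: "exec D s (xs @ ys) = exec D (exec D s xs) ys"
  by (induction xs arbitrary: s) auto

lemma length_exec: "length (exec D s xs) = length s + (\<Sum>x\<leftarrow>xs. instr_width x)"
proof (induction xs arbitrary: s)
  case (Cons x xs)
  have "length (instr_values D s x) = instr_width x" by (cases x) (auto simp: Let_def)
  then show ?case using Cons[of "s @ instr_values D s x"] by simp
qed simp

lemma instr_cost_le_width: "(\<Sum>x\<leftarrow>xs. instr_cost x) \<le> 3 * (\<Sum>x\<leftarrow>xs. instr_width x)"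
proof (induction xs)
  case (Cons x xs) then show ?case by (cases x) auto
qed simp

lemma instr_values_min:
  "a < length s \<Longrightarrow> b < length s \<Longrightarrow>
   instr_values D s (IMin a b) = [lookup s a + lookup s b, min (lookup s a) (lookup s b)]"
  by (auto simp: lookup_append)

lemma instr_values_max:
  "a < length s \<Longrightarrow> b < length s \<Longrightarrow>
   instr_values D s (IMax a b) = [lookup s a + lookup s b, max (lookup s a) (lookup s b)]"
  by (auto simp: lookup_append)

datatype aggregate = Total | Bottleneck

fun aggregate_op :: "aggregate \<Rightarrow> real \<Rightarrow> real \<Rightarrow> real" where
  "aggregate_op Total = (+)"
| "aggregate_op Bottleneck = max"

(* A cell occupies ten store entries, the last one being its table value.  Address 0 of the
   store holds 0: it supplies the 0 of max (d - z) 0 and pads the Total variant to the width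
   of the Bottleneck one. *)
fun cell_code :: "aggregate \<Rightarrow> nat \<Rightarrow> nat \<Rightarrow> nat \<times> nat \<Rightarrow> nat \<times> nat \<times> nat \<Rightarrow> instr list" where
  "cell_code g n za (i, j) (a1, a2, a3) =
     [IQuery (i + 1) (j + 1), IArith Sub n za, IMax (n + 1) 0, IMin a1 a2, IMin (n + 5) a3] @
     (case g of
        Total \<Rightarrow> [IArith Add (n + 3) (n + 7), IArith Add (n + 8) 0]
      | Bottleneck \<Rightarrow> [IMax (n + 3) (n + 7)])"

lemma exec_cell_code:
  assumes "length E = n" "0 < n" "lookup E 0 = 0" "za < n" "a1 < n" "a2 < n" "a3 < n"
  shows "\<exists>ys. exec D E (cell_code g n za (i, j) (a1, a2, a3)) = E @ ys \<and> length ys = 10 \<and>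
    last ys = aggregate_op g (excess_weight D (lookup E za) (i + 1, j + 1))
                (min (min (lookup E a1) (lookup E a2)) (lookup E a3))"
proof -
  define d where "d = D (i + 1) (j + 1) - lookup E za"
  define m where "m = min (lookup E a1) (lookup E a2)"
  define ys where "ys = [D (i + 1) (j + 1), d, d + 0, max d 0, lookup E a1 + lookup E a2, m,
    m + lookup E a3, min m (lookup E a3)]"
  define g' where "g' = max d 0"
  define m' where "m' = min m (lookup E a3)"
  have prefix: "exec D E [IQuery (i + 1) (j + 1), IArith Sub n za, IMax (n + 1) 0, IMin a1 a2, IMin (n + 5) a3]
    = E @ ys"
    using assms by (simp del: instr_values.simps(4,5)
        add: instr_values_min instr_values_max lookup_append lookup_Cons ys_def d_def m_def)
  have "exec D E' (case g of
        Total \<Rightarrow> [IArith Add (n + 3) (n + 7), IArith Add (n + 8) 0]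
      | Bottleneck \<Rightarrow> [IMax (n + 3) (n + 7)]) = E' @ [g' + m', aggregate_op g g' m']"
    if "lookup E' (n + 3) = g'" "lookup E' (n + 7) = m'" "lookup E' 0 = 0" "length E' = n + 8" for E'
    using that by (cases g) (simp_all del: instr_values.simps(4,5)
        add: instr_values_max lookup_append lookup_Cons)
  moreover have "lookup (E @ ys) (n + 3) = g'" "lookup (E @ ys) (n + 7) = m'" "lookup (E @ ys) 0 = 0"
    "length (E @ ys) = n + 8"
    using assms by (simp_all add: ys_def lookup_append lookup_Cons g'_def m'_def)
  ultimately have "exec D E (cell_code g n za (i, j) (a1, a2, a3)) = E @ ys @ [g' + m', aggregate_op g g' m']"
    by (simp only: cell_code.simps exec_append prefix append_assoc)
  moreover have "aggregate_op g g' m' = aggregate_op g (excess_weight D (lookup E za) (i + 1, j + 1))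
                (min (min (lookup E a1) (lookup E a2)) (lookup E a3))"
    by (simp add: g'_def m'_def d_def m_def excess_weight_def)
  ultimately show ?thesis by (intro exI[of _ "ys @ [g' + m', aggregate_op g g' m']"]) (simp add: ys_def)
qed

(* The start cell reads the constant 0 at address 0; boundary cells repeat their only
   predecessor. *)
fun pred_addrs :: "(nat \<Rightarrow> nat \<Rightarrow> nat) \<Rightarrow> nat \<Rightarrow> nat \<Rightarrow> nat \<times> nat \<times> nat" where
  "pred_addrs addr 0 0 = (0, 0, 0)"
| "pred_addrs addr 0 (Suc j) = (addr 0 j, addr 0 j, addr 0 j)"
| "pred_addrs addr (Suc i) 0 = (addr i 0, addr i 0, addr i 0)"
| "pred_addrs addr (Suc i) (Suc j) = (addr i (Suc j), addr (Suc i) j, addr i j)"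

lemma pred_addrs_earlier:
  assumes "P 0" "\<And>i' j'. i' \<le> i \<Longrightarrow> j' \<le> j \<Longrightarrow> (i', j') \<noteq> (i, j) \<Longrightarrow> P (addr i' j')"
  shows "case pred_addrs addr i j of (a1, a2, a3) \<Rightarrow> P a1 \<and> P a2 \<and> P a3"
  using assms by (cases "(addr, i, j)" rule: pred_addrs.cases) (auto intro: assms)

lemma path_dp_pred_addrs:
  assumes "V 0 = 0"
    and "\<And>i' j'. i' \<le> i \<Longrightarrow> j' \<le> j \<Longrightarrow> (i', j') \<noteq> (i, j) \<Longrightarrow> V (addr i' j') = path_dp f G i' j'"
  shows "path_dp f G i j =
    f (G (i + 1, j + 1)) (case pred_addrs addr i j of (a1, a2, a3) \<Rightarrow> min (min (V a1) (V a2)) (V a3))"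
  using assms by (cases "(addr, i, j)" rule: pred_addrs.cases) auto

lemma row_major_less:
  fixes i j i' j' m :: nat
  assumes "j < m" "i' \<le> i" "j' \<le> j" "(i', j') \<noteq> (i, j)"
  shows "i' * m + j' < i * m + j"
proof (cases "i' = i")
  case False
  then have "(i' + 1) * m \<le> i * m" using assms(2) by (intro mult_right_mono) auto
  then show ?thesis using assms(1,3) by simp
qed (use assms in auto)

definition cell_addr :: "nat \<Rightarrow> nat \<Rightarrow> nat \<Rightarrow> nat \<Rightarrow> nat" where
  "cell_addr m2 base i j = base + 10 * (i * m2 + j) + 9"

definition phase_code :: "aggregate \<Rightarrow> nat \<Rightarrow> nat \<Rightarrow> nat \<Rightarrow> nat \<Rightarrow> instr list" where
  "phase_code g m2 base za t = concat (map (\<lambda>t. cell_code g (base + 10 * t) za (t div m2, t mod m2)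
     (pred_addrs (cell_addr m2 base) (t div m2) (t mod m2))) [0..<t])"

lemma row_major_unique:
  fixes i j i0 j0 m :: nat
  assumes "j < m" "i * m + j = i0 * m + j0" "j0 < m"
  shows "i = i0 \<and> j = j0"
proof -
  have "(i * m + j) div m = (i0 * m + j0) div m" "(i * m + j) mod m = (i0 * m + j0) mod m"
    using assms(2) by simp_all
  then show ?thesis using assms(1,3) by simp
qed

lemma exec_cell_code_next:
  fixes D :: "nat \<Rightarrow> nat \<Rightarrow> real" and g :: aggregate and E :: "real list" and za :: nat
  defines "W \<equiv> path_dp (aggregate_op g) (excess_weight D (lookup E za))"
  assumes E: "length E = base + 10 * (i * m2 + j)" "0 < base" "za < base" "lookup E 0 = 0"
    and j: "j < m2"
    and table: "\<And>i' j'. j' < m2 \<Longrightarrow> i' * m2 + j' < i * m2 + j \<Longrightarrow>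
      lookup E (cell_addr m2 base i' j') = W i' j'"
  shows "\<exists>zs. exec D E (cell_code g (base + 10 * (i * m2 + j)) za (i, j) (pred_addrs (cell_addr m2 base) i j))
      = E @ zs \<and> length zs = 10 \<and> last zs = W i j"
proof -
  have earlier: "i' * m2 + j' < i * m2 + j \<and> j' < m2"
    if "i' \<le> i" "j' \<le> j" "(i', j') \<noteq> (i, j)" for i' j'
    using row_major_less[OF j that] that(2) j by simp
  obtain a1 a2 a3 where a: "pred_addrs (cell_addr m2 base) i j = (a1, a2, a3)" by (metis prod_cases3)
  have addr_lt: "cell_addr m2 base i' j' < length E"
    if "i' \<le> i" "j' \<le> j" "(i', j') \<noteq> (i, j)" for i' j'
    using earlier[OF that] E(1) by (simp add: cell_addr_def)
  have "case pred_addrs (cell_addr m2 base) i j of (a1, a2, a3) \<Rightarrow>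
      a1 < length E \<and> a2 < length E \<and> a3 < length E"
    by (rule pred_addrs_earlier[where P = "\<lambda>a. a < length E"]) (use E(1,2) addr_lt in auto)
  then have lt: "0 < length E" "za < length E" "a1 < length E" "a2 < length E" "a3 < length E"
    using a E(1-3) by auto
  obtain zs where zs: "exec D E (cell_code g (base + 10 * (i * m2 + j)) za (i, j) (a1, a2, a3)) = E @ zs"
    "length zs = 10"
    "last zs = aggregate_op g (excess_weight D (lookup E za) (i + 1, j + 1))
       (min (min (lookup E a1) (lookup E a2)) (lookup E a3))"
    using exec_cell_code[where D = D and g = g and i = i and j = j, OF refl lt(1) E(4) lt(2-5)]
    unfolding E(1) by blast
  have filled: "lookup E (cell_addr m2 base i' j') = W i' j'"
    if "i' \<le> i" "j' \<le> j" "(i', j') \<noteq> (i, j)" for i' j'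
    using table earlier[OF that] by blast
  have "W i j = last zs"
    using path_dp_pred_addrs[where V = "lookup E" and addr = "cell_addr m2 base", OF E(4) filled[unfolded W_def]]
      a zs(3)
    unfolding W_def by simp
  then show ?thesis using a zs(1,2) by auto
qed

lemma exec_phase_code:
  fixes D :: "nat \<Rightarrow> nat \<Rightarrow> real" and g :: aggregate
  assumes s: "length s = base" "0 < base" "za < base" "lookup s 0 = 0" and m2: "0 < m2"
  defines "W \<equiv> path_dp (aggregate_op g) (excess_weight D (lookup s za))"
  shows "\<exists>ys. exec D s (phase_code g m2 base za t) = s @ ys \<and> length ys = 10 * t \<and>
    (\<forall>i j. j < m2 \<longrightarrow> i * m2 + j < t \<longrightarrow> lookup (s @ ys) (cell_addr m2 base i j) = W i j)"
proof (induction t)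
  case 0
  show ?case by (simp add: phase_code_def)
next
  case (Suc t)
  then obtain ys where ys: "exec D s (phase_code g m2 base za t) = s @ ys" "length ys = 10 * t"
    and table: "\<And>i j. j < m2 \<Longrightarrow> i * m2 + j < t \<Longrightarrow> lookup (s @ ys) (cell_addr m2 base i j) = W i j"
    by blast
  define i0 j0 where "i0 = t div m2" and "j0 = t mod m2"
  have t: "t = i0 * m2 + j0" "j0 < m2" using m2 by (simp_all add: i0_def j0_def)
  have "lookup (s @ ys) za = lookup s za" "lookup (s @ ys) 0 = 0"
    using s by (simp_all add: lookup_append_left)
  moreover have "length (s @ ys) = base + 10 * (i0 * m2 + j0)" using ys(2) s(1) t(1) by simp
  moreover have "lookup (s @ ys) (cell_addr m2 base i' j') =
      path_dp (aggregate_op g) (excess_weight D (lookup (s @ ys) za)) i' j'"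
    if "j' < m2" "i' * m2 + j' < i0 * m2 + j0" for i' j'
    using table[OF that(1)] that(2) t(1) \<open>lookup (s @ ys) za = lookup s za\<close> unfolding W_def by simp
  ultimately obtain zs where zs:
    "exec D (s @ ys) (cell_code g (base + 10 * t) za (i0, j0) (pred_addrs (cell_addr m2 base) i0 j0))
      = (s @ ys) @ zs" "length zs = 10" "last zs = W i0 j0"
    using exec_cell_code_next[where E = "s @ ys" and D = D and g = g and i = i0 and j = j0 and za = za,
        OF _ s(2,3) _ t(2)]
    unfolding W_def t(1) by metis
  have "phase_code g m2 base za (Suc t) = phase_code g m2 base za t @
      cell_code g (base + 10 * t) za (i0, j0) (pred_addrs (cell_addr m2 base) i0 j0)"
    by (simp add: phase_code_def i0_def j0_def)
  then have "exec D s (phase_code g m2 base za (Suc t)) = s @ ys @ zs"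
    using ys(1) zs(1) by simp
  moreover have "lookup (s @ ys @ zs) (cell_addr m2 base i j) = W i j"
    if ij: "j < m2" "i * m2 + j < Suc t" for i j
  proof (cases "i * m2 + j < t")
    case True
    then have "cell_addr m2 base i j < length (s @ ys)" using ys(2) s(1) by (simp add: cell_addr_def)
    then show ?thesis using table[OF ij(1) True] lookup_append_left[of _ "s @ ys" zs] by simp
  next
    case False
    then have "i * m2 + j = i0 * m2 + j0" using ij(2) t(1) by simp
    then have "i = i0 \<and> j = j0" using row_major_unique[OF ij(1) _ t(2)] by blast
    moreover have "zs \<noteq> []" using zs(2) by auto
    ultimately show ?thesis
      using zs(2,3) ys(2) s(1) t(1) lookup_append_last[of zs "s @ ys"] by (simp add: cell_addr_def ac_simps)
  qed
  ultimately show ?case using ys(2) zs(2) by (intro exI[of _ "ys @ zs"]) auto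
qed

lemma exec_phase_code_grid:
  fixes D :: "nat \<Rightarrow> nat \<Rightarrow> real" and g :: aggregate
  assumes s: "length s = base" "0 < base" "za < base" "lookup s 0 = 0" and m: "0 < m1" "0 < m2"
  shows "\<exists>ys. exec D s (phase_code g m2 base za (m1 * m2)) = s @ ys \<and> length ys = 10 * (m1 * m2) \<and>
    last ys = path_dp (aggregate_op g) (excess_weight D (lookup s za)) (m1 - 1) (m2 - 1)"
proof -
  obtain ys where ys: "exec D s (phase_code g m2 base za (m1 * m2)) = s @ ys" "length ys = 10 * (m1 * m2)"
    and table: "\<And>i j. j < m2 \<Longrightarrow> i * m2 + j < m1 * m2 \<Longrightarrow>
      lookup (s @ ys) (cell_addr m2 base i j) = path_dp (aggregate_op g) (excess_weight D (lookup s za)) i j"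
    using exec_phase_code[OF s m(2), of D g "m1 * m2"] by blast
  obtain a b where ab: "m1 = Suc a" "m2 = Suc b" using m by (metis gr0_implies_Suc)
  have "cell_addr m2 base (m1 - 1) (m2 - 1) = length s + length ys - 1"
    using ys(2) s(1) by (simp add: cell_addr_def ab algebra_simps)
  moreover have "ys \<noteq> []" using ys(2) by (auto simp: ab)
  ultimately have "last ys = lookup (s @ ys) (cell_addr m2 base (m1 - 1) (m2 - 1))"
    using lookup_append_last[of ys s] by simp
  also have "\<dots> = path_dp (aggregate_op g) (excess_weight D (lookup s za)) (m1 - 1) (m2 - 1)"
    by (rule table) (simp_all add: ab)
  finally show ?thesis using ys by blast
qed

section \<open>The approximation algorithm\<close>

(* Store layout: address 0 holds 0, the bottleneck table follows, with the value M at address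
   10 P (P = m1 m2).  Block i starts at address S and holds (1 + eps)^i, z_i = M / (1 + eps)^i,
   the Total table for the threshold z_i, k, k z_i, candidate i and the running minimum of the
   candidates; address S - 1 holds the running minimum of the previous block. *)
definition candidate_code :: "nat \<Rightarrow> nat \<Rightarrow> nat \<Rightarrow> real \<Rightarrow> nat \<Rightarrow> nat \<Rightarrow> instr list" where
  "candidate_code m1 m2 k \<epsilon> i S = (let P = m1 * m2 in
     [IConst ((1 + \<epsilon>) ^ i), IArith Dvd (10 * P) S] @
     phase_code Total m2 (S + 2) (S + 1) P @
     [IConst (real k), IArith Mul (S + 2 + 10 * P) (S + 1),
      IArith Add (S + 3 + 10 * P) (S + 1 + 10 * P),
      IMin (if i = 0 then S + 4 + 10 * P else S - 1) (S + 4 + 10 * P)])"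

lemma Min_image_atMost_Suc:
  "Min (f ` {..Suc i}) = min (Min (f ` {..i})) (f (Suc i))" for f :: "nat \<Rightarrow> 'a::linorder"
  by (simp add: atMost_Suc min.commute)

lemma exec_candidate_code:
  fixes D :: "nat \<Rightarrow> nat \<Rightarrow> real" and m1 m2 k :: nat and \<epsilon> :: real
  defines "F \<equiv> kdtw_candidate D m1 m2 k \<epsilon>"
  assumes E: "length E = S" "10 * (m1 * m2) < S" "lookup E 0 = 0"
      "lookup E (10 * (m1 * m2)) = bottleneck_dp D m1 m2"
    and prev: "0 < i \<Longrightarrow> lookup E (S - 1) = Min (F ` {..i - 1})"
    and m: "0 < m1" "0 < m2"
  shows "\<exists>ys. exec D E (candidate_code m1 m2 k \<epsilon> i S) = E @ ys \<and> length ys = 10 * (m1 * m2) + 7 \<and>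
    last ys = Min (F ` {..i})"
proof -
  define P where "P = m1 * m2"
  define z where "z = bottleneck_dp D m1 m2 / (1 + \<epsilon>) ^ i"
  define E1 where "E1 = E @ [(1 + \<epsilon>) ^ i, z]"
  have E1: "exec D E [IConst ((1 + \<epsilon>) ^ i), IArith Dvd (10 * P) S] = E1"
    using E by (simp add: E1_def z_def P_def lookup_append lookup_Cons)
  have "length E1 = S + 2" "lookup E1 (S + 1) = z" "lookup E1 0 = 0"
    using E by (simp_all add: E1_def lookup_append lookup_Cons)
  then obtain ys where ys: "exec D E1 (phase_code Total m2 (S + 2) (S + 1) P) = E1 @ ys"
    "length ys = 10 * P" "last ys = path_dp (+) (excess_weight D z) (m1 - 1) (m2 - 1)"
    using exec_phase_code_grid[of E1 "S + 2" "S + 1" m1 m2 D Total] m by (auto simp: P_def)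
  define c where "c = F i"
  define v where "v = (if i = 0 then c else lookup E (S - 1))"
  define tl where "tl = [real k, real k * z, c, v + c, min v c]"
  have c: "c = real k * z + last ys"
    using ys(3) by (simp add: c_def F_def kdtw_candidate_def z_def Let_def)
  have tail: "exec D E' [IConst (real k), IArith Mul (S + 2 + 10 * P) (S + 1),
      IArith Add (S + 3 + 10 * P) (S + 1 + 10 * P),
      IMin (if i = 0 then S + 4 + 10 * P else S - 1) (S + 4 + 10 * P)] = E' @ tl"
    if "length E' = S + 2 + 10 * P" "lookup E' (S + 1) = z" "lookup E' (S + 1 + 10 * P) = last ys"
      "lookup E' (S - 1) = lookup E (S - 1)" for E'
    using that E(2) by (cases "i = 0") (auto simp del: instr_values.simps(4,5)
        simp add: instr_values_min lookup_append lookup_Cons tl_def v_def c P_def)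
  have "ys \<noteq> []" using ys(2) m by (auto simp: P_def)
  then have "length (E1 @ ys) = S + 2 + 10 * P" "lookup (E1 @ ys) (S + 1) = z"
    "lookup (E1 @ ys) (S + 1 + 10 * P) = last ys" "lookup (E1 @ ys) (S - 1) = lookup E (S - 1)"
    using E(1,2) ys(2) lookup_append_last[of ys E1]
    by (auto simp: E1_def P_def lookup_append lookup_Cons)
  from tail[OF this] have "exec D E (candidate_code m1 m2 k \<epsilon> i S) = E1 @ ys @ tl"
    unfolding candidate_code_def Let_def P_def[symmetric] by (simp only: exec_append E1 ys(1) append_assoc)
  moreover have "min v c = Min (F ` {..i})"
    using prev by (cases i) (auto simp: v_def c_def Min_image_atMost_Suc)
  ultimately show ?thesis using ys(2) by (intro exI[of _ "[(1 + \<epsilon>) ^ i, z] @ ys @ tl"]) (simp add: tl_def P_def E1_def)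
qed

definition search_code :: "nat \<Rightarrow> nat \<Rightarrow> nat \<Rightarrow> real \<Rightarrow> nat \<Rightarrow> instr list" where
  "search_code m1 m2 k \<epsilon> n = IConst 0 # phase_code Bottleneck m2 1 0 (m1 * m2) @
     concat (map (\<lambda>i. candidate_code m1 m2 k \<epsilon> i (1 + 10 * (m1 * m2) + i * (10 * (m1 * m2) + 7))) [0..<n])"

lemma exec_search_code:
  fixes D :: "nat \<Rightarrow> nat \<Rightarrow> real"
  assumes m: "0 < m1" "0 < m2"
  shows "length (exec D [] (search_code m1 m2 k \<epsilon> n)) = 1 + 10 * (m1 * m2) + n * (10 * (m1 * m2) + 7) \<and>
    lookup (exec D [] (search_code m1 m2 k \<epsilon> n)) 0 = 0 \<and>
    lookup (exec D [] (search_code m1 m2 k \<epsilon> n)) (10 * (m1 * m2)) = bottleneck_dp D m1 m2 \<and>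
    (0 < n \<longrightarrow> last (exec D [] (search_code m1 m2 k \<epsilon> n)) = Min (kdtw_candidate D m1 m2 k \<epsilon> ` {..n - 1}))"
proof (induction n)
  case 0
  obtain ys where "exec D [0] (phase_code Bottleneck m2 1 0 (m1 * m2)) = [0] @ ys"
    "length ys = 10 * (m1 * m2)" "last ys = bottleneck_dp D m1 m2"
    using exec_phase_code_grid[of "[0]" 1 0 m1 m2 D Bottleneck] m
    by (auto simp: lookup_def bottleneck_dp_def)
  moreover have "ys \<noteq> []" using calculation(2) m by auto
  ultimately show ?case
    using lookup_append_last[of ys "[0]"] by (simp add: search_code_def lookup_Cons)
next
  case (Suc n)
  define s where "s = exec D [] (search_code m1 m2 k \<epsilon> n)"
  define S where "S = 1 + 10 * (m1 * m2) + n * (10 * (m1 * m2) + 7)"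
  have "length s = S" using Suc.IH by (simp add: s_def S_def)
  then have "s \<noteq> []" by (auto simp: S_def)
  have s: "length s = S" "10 * (m1 * m2) < S" "lookup s 0 = 0" "lookup s (10 * (m1 * m2)) = bottleneck_dp D m1 m2"
    "0 < n \<Longrightarrow> lookup s (S - 1) = Min (kdtw_candidate D m1 m2 k \<epsilon> ` {..n - 1})"
    using Suc.IH lookup_last[OF \<open>s \<noteq> []\<close>] \<open>length s = S\<close> by (auto simp: s_def S_def)
  obtain ys where ys: "exec D s (candidate_code m1 m2 k \<epsilon> n S) = s @ ys"
    "length ys = 10 * (m1 * m2) + 7" "last ys = Min (kdtw_candidate D m1 m2 k \<epsilon> ` {..n})"
    using exec_candidate_code[OF s m] by blast
  have "exec D [] (search_code m1 m2 k \<epsilon> (Suc n)) = s @ ys"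
    using ys(1) by (simp add: search_code_def s_def S_def)
  moreover have "ys \<noteq> []" using ys(2) by auto
  ultimately show ?case using s ys by (simp add: S_def lookup_append_left)
qed

definition kdtw_approx_tree :: "nat \<Rightarrow> nat \<Rightarrow> nat \<Rightarrow> real \<Rightarrow> nat \<Rightarrow> ctree" where
  "kdtw_approx_tree m1 m2 k \<epsilon> N =
     compile 0 (search_code m1 m2 k \<epsilon> (Suc N)) (10 * (m1 * m2) + Suc N * (10 * (m1 * m2) + 7))"

lemma run_kdtw_approx_tree:
  fixes D :: "nat \<Rightarrow> nat \<Rightarrow> real"
  assumes m: "0 < m1" "0 < m2"
  shows "fst (run D [] (kdtw_approx_tree m1 m2 k \<epsilon> N)) = Min (kdtw_candidate D m1 m2 k \<epsilon> ` {..N})"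
    and "snd (run D [] (kdtw_approx_tree m1 m2 k \<epsilon> N)) \<le> 85 * (m1 * m2) * Suc N"
proof -
  define code where "code = search_code m1 m2 k \<epsilon> (Suc N)"
  define P where "P = m1 * m2"
  have run: "run D [] (kdtw_approx_tree m1 m2 k \<epsilon> N) =
      (lookup (exec D [] code) (10 * P + Suc N * (10 * P + 7)), Suc (\<Sum>x\<leftarrow>code. instr_cost x))"
    by (simp add: kdtw_approx_tree_def run_compile code_def P_def)
  have s: "length (exec D [] code) = 1 + 10 * P + Suc N * (10 * P + 7)"
    "last (exec D [] code) = Min (kdtw_candidate D m1 m2 k \<epsilon> ` {..N})"
    using exec_search_code[OF m, of D k \<epsilon> "Suc N"] by (simp_all add: code_def P_def)
  moreover have "exec D [] code \<noteq> []" using s(1) by auto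
  ultimately have "lookup (exec D [] code) (10 * P + Suc N * (10 * P + 7)) = Min (kdtw_candidate D m1 m2 k \<epsilon> ` {..N})"
    using lookup_last[of "exec D [] code"] by (simp add: ac_simps)
  then show "fst (run D [] (kdtw_approx_tree m1 m2 k \<epsilon> N)) = Min (kdtw_candidate D m1 m2 k \<epsilon> ` {..N})"
    using run by simp
  have "(\<Sum>x\<leftarrow>code. instr_width x) = length (exec D [] code)"
    by (simp add: length_exec)
  then have "Suc (\<Sum>x\<leftarrow>code. instr_cost x) \<le> 1 + 3 * (1 + 10 * P + Suc N * (10 * P + 7))"
    using instr_cost_le_width[of code] s(1) by simp
  also have "\<dots> \<le> 85 * P * Suc N"
  proof -
    have "1 \<le> P" using m by (simp add: P_def)
    then have "Suc N \<le> P * Suc N" using mult_le_mono1[of 1 P "Suc N"] by simp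
    moreover have "P \<le> P * Suc N" by simp
    ultimately have "1 \<le> P * Suc N" "P \<le> P * Suc N" "Suc N \<le> P * Suc N" by simp_all
    then show ?thesis by (simp add: algebra_simps)
  qed
  finally show "snd (run D [] (kdtw_approx_tree m1 m2 k \<epsilon> N)) \<le> 85 * (m1 * m2) * Suc N"
    using run by (simp add: P_def)
qed

lemma two_le_pow_ceiling_inverse:
  fixes \<epsilon> :: real
  assumes "0 < \<epsilon>"
  shows "2 \<le> (1 + \<epsilon>) ^ nat \<lceil>1 / \<epsilon>\<rceil>"
proof -
  have "real (nat \<lceil>1 / \<epsilon>\<rceil>) = of_int \<lceil>1 / \<epsilon>\<rceil>" using assms by simp
  moreover have "1 / \<epsilon> * \<epsilon> \<le> of_int \<lceil>1 / \<epsilon>\<rceil> * \<epsilon>"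
    using assms by (intro mult_right_mono) auto
  then have "1 \<le> of_int \<lceil>1 / \<epsilon>\<rceil> * \<epsilon>" using assms by simp
  ultimately have "2 \<le> 1 + real (nat \<lceil>1 / \<epsilon>\<rceil>) * \<epsilon>" by simp
  also have "\<dots> \<le> (1 + \<epsilon>) ^ nat \<lceil>1 / \<epsilon>\<rceil>"
    using Bernoulli_inequality[of \<epsilon> "nat \<lceil>1 / \<epsilon>\<rceil>"] assms by simp
  finally show ?thesis .
qed

lemma le_two_pow_ceiling_log:
  fixes x :: real
  assumes "0 < x"
  shows "x \<le> 2 ^ nat \<lceil>log 2 x\<rceil>"
proof -
  have "x = 2 powr log 2 x" using assms by simp
  also have "\<dots> \<le> 2 powr real (nat \<lceil>log 2 x\<rceil>)" by (intro powr_mono) linarith+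
  finally show ?thesis by (simp add: powr_realpow)
qed

lemma geometric_grid_length:
  fixes \<epsilon> :: real and k :: nat
  assumes \<epsilon>: "0 < \<epsilon>" "\<epsilon> \<le> 1" and k: "1 \<le> k"
  obtains N where "real k \<le> \<epsilon> * (1 + \<epsilon>) ^ N" "real (Suc N) \<le> 5 * max 1 (log 2 (real k / \<epsilon>)) / \<epsilon>"
proof
  define B where "B = nat \<lceil>1 / \<epsilon>\<rceil>"
  define L where "L = nat \<lceil>log 2 (real k / \<epsilon>)\<rceil>"
  have "real k / \<epsilon> \<le> 2 ^ L" unfolding L_def using \<epsilon> k by (intro le_two_pow_ceiling_log) simp
  also have "\<dots> \<le> ((1 + \<epsilon>) ^ B) ^ L"
    unfolding B_def using two_le_pow_ceiling_inverse[OF \<epsilon>(1)] by (intro power_mono) auto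
  finally show "real k \<le> \<epsilon> * (1 + \<epsilon>) ^ (B * L)"
    using \<epsilon> by (simp add: divide_le_eq power_mult mult.commute)
  define \<Lambda> where "\<Lambda> = max 1 (log 2 (real k / \<epsilon>))"
  have "1 \<le> real k / \<epsilon>" using \<epsilon> k by (simp add: le_divide_eq)
  then have "real L \<le> 2 * \<Lambda>" unfolding L_def \<Lambda>_def by linarith
  moreover have "real B \<le> 2 / \<epsilon>"
  proof -
    have "1 \<le> 1 / \<epsilon>" using \<epsilon> by simp
    moreover have "real B \<le> 1 / \<epsilon> + 1" unfolding B_def using \<open>1 \<le> 1 / \<epsilon>\<close> by linarith
    ultimately show ?thesis by simp
  qed
  ultimately have "real B * real L \<le> 2 / \<epsilon> * (2 * \<Lambda>)" using \<epsilon> by (intro mult_mono) auto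
  moreover have "1 \<le> \<Lambda> / \<epsilon>" using \<epsilon> by (simp add: \<Lambda>_def le_divide_eq)
  ultimately show "real (Suc (B * L)) \<le> 5 * max 1 (log 2 (real k / \<epsilon>)) / \<epsilon>"
    unfolding \<Lambda>_def[symmetric] by simp
qed

lemma kdtw_approx_tree_correct:
  assumes "\<sigma> \<noteq> []" "\<tau> \<noteq> []" "1 \<le> k" "0 < \<epsilon>" "real k \<le> \<epsilon> * (1 + \<epsilon>) ^ N"
  shows "let (X, c) = run (curve_oracle \<sigma> \<tau>) [] (kdtw_approx_tree (length \<sigma>) (length \<tau>) k \<epsilon> N) in
    kdtw k \<sigma> \<tau> \<le> X \<and> X \<le> (1 + \<epsilon>) * kdtw k \<sigma> \<tau> \<and> c \<le> 85 * (length \<sigma> * length \<tau>) * Suc N"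
  using kdtw_approx_by_candidates[OF assms] run_kdtw_approx_tree[of "length \<sigma>" "length \<tau>"] assms(1,2)
  by (simp add: case_prod_beta)

theorem theorem3p4:
  "\<exists>C::real. C > 0 \<and>
     (\<forall>(m1::nat) (m2::nat) (k::nat) (\<epsilon>::real).
        1 \<le> m1 \<longrightarrow> 1 \<le> m2 \<longrightarrow> 1 \<le> k \<longrightarrow> 0 < \<epsilon> \<longrightarrow> \<epsilon> \<le> 1 \<longrightarrow>
        (\<exists>A::ctree. \<forall>(d::nat) (\<sigma>::real list list) (\<tau>::real list list).
           length \<sigma> = m1 \<longrightarrow> length \<tau> = m2 \<longrightarrow>
           (\<forall>v\<in>set \<sigma>. length v = d) \<longrightarrow> (\<forall>w\<in>set \<tau>. length w = d) \<longrightarrow>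
           (let (X, c) = run (curve_oracle \<sigma> \<tau>) [] A in
              kdtw k \<sigma> \<tau> \<le> X \<and> X \<le> (1 + \<epsilon>) * kdtw k \<sigma> \<tau> \<and>
              real c \<le> C * real m1 * real m2 * max 1 (log 2 (real k / \<epsilon>)) / \<epsilon>)))"
proof (intro exI[of _ 425] conjI allI impI)
  fix m1 m2 k :: nat and \<epsilon> :: real
  assume m: "1 \<le> m1" "1 \<le> m2" and k: "1 \<le> k" and \<epsilon>: "0 < \<epsilon>" "\<epsilon> \<le> 1"
  obtain N where N: "real k \<le> \<epsilon> * (1 + \<epsilon>) ^ N"
    and size: "real (Suc N) \<le> 5 * max 1 (log 2 (real k / \<epsilon>)) / \<epsilon>"
    using geometric_grid_length[OF \<epsilon> k] .
  have cost: "real c \<le> 425 * real m1 * real m2 * max 1 (log 2 (real k / \<epsilon>)) / \<epsilon>"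
    if "c \<le> 85 * (m1 * m2) * Suc N" for c
  proof -
    have "real c \<le> 85 * (real m1 * real m2) * real (Suc N)"
      using that by (metis of_nat_le_iff of_nat_mult of_nat_numeral)
    also have "\<dots> \<le> 85 * (real m1 * real m2) * (5 * max 1 (log 2 (real k / \<epsilon>)) / \<epsilon>)"
      using size by (intro mult_left_mono) auto
    finally show ?thesis by simp
  qed
  show "\<exists>A. \<forall>d \<sigma> \<tau>. length \<sigma> = m1 \<longrightarrow> length \<tau> = m2 \<longrightarrow>
           (\<forall>v\<in>set \<sigma>. length v = d) \<longrightarrow> (\<forall>w\<in>set \<tau>. length w = d) \<longrightarrow>
           (let (X, c) = run (curve_oracle \<sigma> \<tau>) [] A in
              kdtw k \<sigma> \<tau> \<le> X \<and> X \<le> (1 + \<epsilon>) * kdtw k \<sigma> \<tau> \<and>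
              real c \<le> 425 * real m1 * real m2 * max 1 (log 2 (real k / \<epsilon>)) / \<epsilon>)"
  proof (intro exI[of _ "kdtw_approx_tree m1 m2 k \<epsilon> N"] allI impI)
    fix d :: nat and \<sigma> \<tau> :: "real list list"
    assume len: "length \<sigma> = m1" "length \<tau> = m2"
    then have "\<sigma> \<noteq> []" "\<tau> \<noteq> []" using m by auto
    from kdtw_approx_tree_correct[OF this k \<epsilon>(1) N]
    show "let (X, c) = run (curve_oracle \<sigma> \<tau>) [] (kdtw_approx_tree m1 m2 k \<epsilon> N) in
        kdtw k \<sigma> \<tau> \<le> X \<and> X \<le> (1 + \<epsilon>) * kdtw k \<sigma> \<tau> \<and>
        real c \<le> 425 * real m1 * real m2 * max 1 (log 2 (real k / \<epsilon>)) / \<epsilon>"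
      using cost unfolding len by (simp add: case_prod_beta)
  qed
qed simp

end
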